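(* Let $\mathcal{RR}_2$ be the set of partitions in which consecutive parts differ by at least $2$ and all parts are greater than $1$ (including the empty partition). For a nonempty partition $\pi=(\lambda_1,\dots,\lambda_\nu)$ let $\omega_{2,2}(\pi)=(\lambda_\nu-1)\prod_{i=1}^{\nu-1}(\lambda_i-\lambda_{i+1}-1)$, and let $\omega_{2,2}$ of the empty partition be $1$. Then, as formal power series, \[\sum_{\pi\in\mathcal{RR}_2}\omega_{2,2}(\pi)\,q^{|\pi|}=\sum_{\pi\in\tilde C_{\ge 0}}q^{|\pi|},\] where $\tilde C_{\ge0}$ is the set of all partitions with crank $\ge 0$.
   Context: A partition is a finite weakly decreasing sequence of positive integers; $|\pi|$ is the sum of its parts. The crank of a partition $\pi$ is defined as: the largest part of $\pi$ if $1$ is not a part of $\pi$ (the empty partition has crank $0$); otherwise, (the number of parts of $\pi$ larger than the number of $1$'s in $\pi$) minus (the number of $1$'s in $\pi$). *)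

theory Defs
  imports "HOL-Computational_Algebra.Formal_Power_Series"
begin

definition is_partition :: "nat list \<Rightarrow> bool" where
  "is_partition xs \<longleftrightarrow> sorted_wrt (\<ge>) xs \<and> (\<forall>x\<in>set xs. 0 < x)"

definition partitions_of :: "nat \<Rightarrow> nat list set" where
  "partitions_of n = {xs. is_partition xs \<and> sum_list xs = n}"

definition ones :: "nat list \<Rightarrow> nat" where
  "ones xs = count_list xs 1"

definition crank :: "nat list \<Rightarrow> int" where
  "crank xs = (if ones xs = 0 then (if xs = [] then 0 else int (hd xs))
               else int (length (filter (\<lambda>x. x > ones xs) xs)) - int (ones xs))"

definition RR2 :: "nat list \<Rightarrow> bool" where
  "RR2 xs \<longleftrightarrow> is_partition xs \<and> (\<forall>x\<in>set xs. 1 < x)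
      \<and> (\<forall>i. Suc i < length xs \<longrightarrow> xs ! i \<ge> xs ! Suc i + 2)"

text \<open>omega_{2,2}; integer-valued (all factors are positive on RR_2 anyway).\<close>
definition omega22 :: "nat list \<Rightarrow> int" where
  "omega22 xs = (if xs = [] then 1
     else (int (last xs) - 1) *
          (\<Prod>i<length xs - 1. int (xs ! i) - int (xs ! Suc i) - 1))"

end

theory Submission
  imports Defs "HOL-Library.Multiset"
begin

text \<open>
  Call an index \<open>j\<close> with \<open>\<lambda>\<^sub>j = j\<close> a fixed point of the partition \<open>\<lambda>\<close>.
  Replacing the fixed part \<open>j\<close> by \<open>j\<close> ones is a bijection, preserving the size, from partitions
  with a fixed point onto partitions of negative crank; hence partitions of nonnegative crank are
  equinumerous with fixed-point-free partitions.
  Stripping the principal hooks of a fixed-point-free partition one by one gives hook lengths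
  \<open>h\<^sub>1 > \<dots> > h\<^sub>\<nu>\<close> forming a partition in \<open>\<R>\<R>\<^sub>2\<close> of the same size. Conversely the partition
  is rebuilt hook by hook from the inside out, and the arm of the \<open>k\<close>-th hook can be chosen in
  exactly \<open>h\<^sub>k - h\<^sub>k\<^sub>+\<^sub>1 - 1\<close> ways (\<open>h\<^sub>\<nu> - 1\<close> for the innermost one), so each fibre has
  \<open>\<omega>\<^sub>2\<^sub>,\<^sub>2\<close> elements.
\<close>

section \<open>Fixed points and negative crank\<close>

definition parts_above :: "nat multiset \<Rightarrow> nat \<Rightarrow> nat" where
  "parts_above M j = size (filter_mset (\<lambda>x. j < x) M)"

definition partition_msets :: "nat \<Rightarrow> nat multiset set" where
  "partition_msets n = {M. (\<forall>x\<in>#M. 0 < x) \<and> sum_mset M = n}"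

text \<open>For \<open>\<lambda>\<^sub>1 \<ge> \<lambda>\<^sub>2 \<ge> \<dots>\<close> the condition says \<open>\<lambda>\<^sub>j \<ge> j\<close> and \<open>\<lambda>\<^sub>j \<le> j\<close>, i.e.\ \<open>\<lambda>\<^sub>j = j\<close>.\<close>
definition has_fixed_point :: "nat multiset \<Rightarrow> bool" where
  "has_fixed_point M \<longleftrightarrow> (\<exists>j\<ge>1. parts_above M j < j \<and> j \<le> parts_above M (j - 1))"

definition neg_crank :: "nat multiset \<Rightarrow> bool" where
  "neg_crank M \<longleftrightarrow> count M 1 \<noteq> 0 \<and> parts_above M (count M 1) < count M 1"

text \<open>If \<open>M\<close> has a fixed point, it is \<open>pivot M\<close>; if \<open>M\<close> has negative crank, \<open>M\<close> has at
  least \<open>pivot M\<close> ones.\<close>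
definition pivot :: "nat multiset \<Rightarrow> nat" where
  "pivot M = (LEAST j. parts_above M j < j)"

definition explode_pivot :: "nat multiset \<Rightarrow> nat multiset" where
  "explode_pivot M = M - {#pivot M#} + replicate_mset (pivot M) 1"

definition collapse_ones :: "nat multiset \<Rightarrow> nat multiset" where
  "collapse_ones M = M - replicate_mset (pivot M) 1 + {#pivot M#}"

lemma parts_above_antimono: "i \<le> k \<Longrightarrow> parts_above M k \<le> parts_above M i"
  unfolding parts_above_def by (intro size_mset_mono mset_subset_eqI) auto

lemma parts_above_add [simp]: "parts_above (M + N) i = parts_above M i + parts_above N i"
  by (simp add: parts_above_def)

lemma parts_above_add_mset [simp]:
  "parts_above (add_mset a M) i = (if i < a then 1 else 0) + parts_above M i"
  by (simp add: parts_above_def)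

lemma parts_above_empty [simp]: "parts_above {#} i = 0"
  by (simp add: parts_above_def)

lemma parts_above_replicate_one [simp]: "0 < i \<Longrightarrow> parts_above (replicate_mset k (Suc 0)) i = 0"
  by (induct k) (auto simp: parts_above_def)

lemma parts_above_diff:
  "N \<subseteq># M \<Longrightarrow> parts_above (M - N) i = parts_above M i - parts_above N i"
  by (metis parts_above_add add_diff_cancel_right' subset_mset.diff_add)

lemma parts_above_pred:
  assumes "1 \<le> j" shows "parts_above M (j - 1) = parts_above M j + count M j"
proof -
  have "filter_mset (\<lambda>x. j - 1 < x) M = filter_mset (\<lambda>x. j < x) M + filter_mset (\<lambda>x. x = j) M"
    using assms by (intro multiset_eqI) auto
  then show ?thesis by (simp add: parts_above_def filter_eq_replicate_mset)
qed

lemma parts_above_pivot: "parts_above M (pivot M) < pivot M"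
proof -
  have "parts_above M (Suc (size M)) < Suc (size M)"
    using size_filter_mset_lesseq by (simp add: parts_above_def le_imp_less_Suc)
  then show ?thesis unfolding pivot_def by (rule LeastI)
qed

lemma le_parts_above_below_pivot: "i < pivot M \<Longrightarrow> i \<le> parts_above M i"
  unfolding pivot_def using not_less_Least by (metis not_less)

lemma pivot_pos: "1 \<le> pivot M"
  using parts_above_pivot[of M] by (cases "pivot M") auto

lemma pivot_eqI:
  assumes "1 \<le> j" "parts_above M j < j" "\<And>i. 1 \<le> i \<Longrightarrow> i < j \<Longrightarrow> i \<le> parts_above M i"
  shows "pivot M = j"
  unfolding pivot_def
proof (rule Least_equality)
  show "\<And>i. parts_above M i < i \<Longrightarrow> j \<le> i"
    using assms(3) by (metis less_one not_le not_less0)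
qed (fact assms(2))

lemma has_fixed_point_pivot:
  assumes "has_fixed_point M"
  shows "pivot M \<le> parts_above M (pivot M - 1)" "pivot M \<in># M"
proof -
  obtain j where j: "1 \<le> j" "parts_above M j < j" "j \<le> parts_above M (j - 1)"
    using assms has_fixed_point_def by auto
  have "pivot M = j"
  proof (rule pivot_eqI[OF j(1,2)])
    fix i assume "1 \<le> i" "i < j"
    then show "i \<le> parts_above M i" using parts_above_antimono[of i "j - 1" M] j by linarith
  qed
  moreover have "count M j > 0" using parts_above_pred[of j M] j by linarith
  ultimately show "pivot M \<le> parts_above M (pivot M - 1)" "pivot M \<in># M" using j by auto
qed

lemma explode_pivot_props:
  assumes "M \<in> partition_msets n" "has_fixed_point M"
  shows "explode_pivot M \<in> partition_msets n" "neg_crank (explode_pivot M)"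
    "collapse_ones (explode_pivot M) = M"
proof -
  define j where "j = pivot M"
  define M' where "M' = M - {#j#} + replicate_mset j 1"
  have j1: "1 \<le> j" using pivot_pos j_def by simp
  have jM: "j \<in># M" and jle: "j \<le> parts_above M (j - 1)"
    using has_fixed_point_pivot[OF assms(2)] j_def by auto
  have jlt: "parts_above M j < j" using parts_above_pivot j_def by simp
  have sub: "{#j#} \<subseteq># M" using jM by simp
  have M'_eq: "explode_pivot M = M'" unfolding explode_pivot_def M'_def j_def ..
  have parts_above_M': "parts_above M' i = parts_above M i - (if i < j then 1 else 0)"
    if "1 \<le> i" for i
    using that parts_above_diff[OF sub, of i] by (simp add: M'_def)
  have ones: "j \<le> count M' 1" by (simp add: M'_def)
  have M'_j: "parts_above M' j < j" using parts_above_M'[OF j1] jlt by simp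
  have pivot_M': "pivot M' = j"
  proof (rule pivot_eqI[OF j1 M'_j])
    fix i assume "1 \<le> i" "i < j"
    moreover have "parts_above M (j - 1) \<le> parts_above M i"
      using \<open>i < j\<close> by (intro parts_above_antimono) simp
    ultimately show "i \<le> parts_above M' i" using parts_above_M'[of i] jle by simp
  qed
  show "neg_crank (explode_pivot M)" unfolding M'_eq neg_crank_def
    using ones j1 parts_above_antimono[of j "count M' 1" M'] M'_j by auto
  show "collapse_ones (explode_pivot M) = M"
    unfolding collapse_ones_def M'_eq pivot_M' using jM by (simp add: M'_def)
  have "sum_mset M = j + sum_mset (M - {#j#})" using jM by (metis insert_DiffM sum_mset.add_mset)
  moreover have "\<forall>x\<in>#M'. 0 < x"
    using assms(1) unfolding M'_def partition_msets_def by (auto dest: in_diffD)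
  ultimately show "explode_pivot M \<in> partition_msets n"
    using assms(1) unfolding M'_eq partition_msets_def by (simp add: M'_def)
qed

lemma collapse_ones_props:
  assumes "M \<in> partition_msets n" "neg_crank M"
  shows "collapse_ones M \<in> partition_msets n" "has_fixed_point (collapse_ones M)"
    "explode_pivot (collapse_ones M) = M"
proof -
  define j where "j = pivot M"
  define M' where "M' = M - replicate_mset j 1 + {#j#}"
  have j1: "1 \<le> j" using pivot_pos j_def by simp
  have jlt: "parts_above M j < j" using parts_above_pivot j_def by simp
  have below: "i \<le> parts_above M i" if "i < j" for i
    using le_parts_above_below_pivot that j_def by simp
  have "j \<le> count M 1"
    using assms(2) unfolding j_def pivot_def neg_crank_def by (intro Least_le) auto
  then have sub: "replicate_mset j 1 \<subseteq># M" by (intro mset_subset_eqI) auto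
  have M'_eq: "collapse_ones M = M'" unfolding collapse_ones_def M'_def j_def ..
  have parts_above_M': "parts_above M' i = parts_above M i + (if i < j then 1 else 0)"
    if "1 \<le> i" for i
    using that parts_above_diff[OF sub, of i] by (simp add: M'_def)
  have M'_j: "parts_above M' j < j" using parts_above_M'[OF j1] jlt by simp
  have "j \<le> parts_above M' (j - 1)"
  proof (cases "j = 1")
    case True
    then show ?thesis by (simp add: M'_def)
  next
    case False
    then show ?thesis using parts_above_M'[of "j - 1"] below[of "j - 1"] j1 by simp
  qed
  then show "has_fixed_point (collapse_ones M)"
    unfolding has_fixed_point_def M'_eq using j1 M'_j by (intro exI[of _ j]) simp
  have "pivot M' = j"
  proof (rule pivot_eqI[OF j1 M'_j])
    fix i assume "1 \<le> i" "i < j"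
    then show "i \<le> parts_above M' i" using parts_above_M'[of i] below[of i] by simp
  qed
  then show "explode_pivot (collapse_ones M) = M"
    unfolding explode_pivot_def M'_eq using sub by (simp add: M'_def)
  have "sum_mset M = sum_mset (M - replicate_mset j 1) + sum_mset (replicate_mset j 1)"
    using sub by (metis sum_mset.union subset_mset.diff_add)
  moreover have "\<forall>x\<in>#M'. 0 < x"
    using assms(1) j1 unfolding M'_def partition_msets_def by (auto dest: in_diffD)
  ultimately show "collapse_ones M \<in> partition_msets n"
    using assms(1) unfolding M'_eq partition_msets_def by (simp add: M'_def)
qed

lemma card_has_fixed_point_eq_card_neg_crank:
  "card {M \<in> partition_msets n. has_fixed_point M} = card {M \<in> partition_msets n. neg_crank M}"
proof (rule bij_betw_same_card)
  show "bij_betw explode_pivot {M \<in> partition_msets n. has_fixed_point M}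
                              {M \<in> partition_msets n. neg_crank M}"
    by (rule bij_betw_byWitness[where f' = collapse_ones])
       (auto simp: explode_pivot_props collapse_ones_props)
qed

section \<open>Partitions as lists and as multisets\<close>

lemma finite_partitions_of: "finite (partitions_of n)"
proof (rule finite_subset)
  show "partitions_of n \<subseteq> {xs. set xs \<subseteq> {0..n} \<and> length xs \<le> n}"
  proof clarify
    fix xs assume "xs \<in> partitions_of n"
    then have "\<forall>x\<in>set xs. 0 < x" "sum_list xs = n"
      unfolding partitions_of_def is_partition_def by auto
    moreover have "length xs \<le> sum_list xs" if "\<forall>x\<in>set xs. 0 < x"
      using that by (induct xs) auto
    ultimately show "set xs \<subseteq> {0..n} \<and> length xs \<le> n" using member_le_sum_list by fastforce
  qed
  show "finite {xs. set xs \<subseteq> {0..n} \<and> length xs \<le> n}"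
    by (rule finite_lists_length_le) simp
qed

lemma partition_eqI_mset:
  assumes "is_partition xs" "is_partition ys" "mset xs = mset ys"
  shows "xs = ys"
proof -
  have "sort ys = rev zs" if "is_partition zs" "mset zs = mset ys" for zs
    by (rule properties_for_sort) (use that in \<open>auto simp: is_partition_def sorted_wrt_rev\<close>)
  from this[OF assms(1,3)] this[OF assms(2) refl] show ?thesis by simp
qed

lemma mset_partitions_of: "mset ` partitions_of n = partition_msets n"
proof
  show "mset ` partitions_of n \<subseteq> partition_msets n"
    unfolding partitions_of_def partition_msets_def is_partition_def
    by (auto simp: sum_mset_sum_list)
next
  show "partition_msets n \<subseteq> mset ` partitions_of n"
  proof
    fix M assume M: "M \<in> partition_msets n"
    define xs where "xs = rev (sorted_list_of_multiset M)"
    have "mset xs = M" by (simp add: xs_def)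
    moreover have "sorted_wrt (\<ge>) xs"
      unfolding xs_def sorted_wrt_rev using sorted_sorted_list_of_multiset[of M] by simp
    moreover have "sum_list xs = n"
      using M \<open>mset xs = M\<close> by (simp add: partition_msets_def flip: sum_mset_sum_list)
    moreover have "\<forall>x\<in>set xs. 0 < x" using M by (simp add: xs_def partition_msets_def)
    ultimately show "M \<in> mset ` partitions_of n"
      unfolding partitions_of_def is_partition_def by blast
  qed
qed

lemma card_partitions_of_mset:
  "card {xs \<in> partitions_of n. P (mset xs)} = card {M \<in> partition_msets n. P M}"
proof -
  have "{M \<in> partition_msets n. P M} = mset ` {xs \<in> partitions_of n. P (mset xs)}"
    using mset_partitions_of[of n] by (auto simp: image_iff)
  moreover have "inj_on mset {xs \<in> partitions_of n. P (mset xs)}"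
    by (rule inj_onI) (auto simp: partitions_of_def intro: partition_eqI_mset)
  ultimately show ?thesis by (simp add: card_image)
qed

lemma parts_above_mset: "parts_above (mset xs) j = length (filter (\<lambda>x. j < x) xs)"
  by (simp add: parts_above_def flip: mset_filter size_mset)

lemma crank_nonneg_iff: "0 \<le> crank xs \<longleftrightarrow> \<not> neg_crank (mset xs)"
  unfolding crank_def neg_crank_def ones_def by (auto simp: parts_above_mset count_mset)

lemma card_crank_nonneg:
  "card {xs \<in> partitions_of n. 0 \<le> crank xs}
     = card {xs \<in> partitions_of n. \<not> has_fixed_point (mset xs)}"
proof -
  have fin: "finite (partition_msets n)"
    using finite_partitions_of by (metis finite_imageI mset_partitions_of)
  have card_compl: "card {M \<in> partition_msets n. \<not> P M}
      = card (partition_msets n) - card {M \<in> partition_msets n. P M}" for P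
    using fin by (subst card_Diff_subset[symmetric]) (auto intro: arg_cong[where f = card])
  have "card {xs \<in> partitions_of n. 0 \<le> crank xs}
      = card {M \<in> partition_msets n. \<not> neg_crank M}"
    using card_partitions_of_mset[of n "\<lambda>M. \<not> neg_crank M"] by (simp add: crank_nonneg_iff)
  also have "\<dots> = card {M \<in> partition_msets n. \<not> has_fixed_point M}"
    by (simp add: card_compl card_has_fixed_point_eq_card_neg_crank)
  also have "\<dots> = card {xs \<in> partitions_of n. \<not> has_fixed_point (mset xs)}"
    by (rule card_partitions_of_mset[symmetric])
  finally show ?thesis .
qed

section \<open>Principal hooks\<close>

definition remove_first_column :: "nat list \<Rightarrow> nat list" where
  "remove_first_column r = map (\<lambda>x. x - 1) (filter (\<lambda>x. 2 \<le> x) r)"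

lemma length_remove_first_column: "length (remove_first_column r) \<le> length r"
  unfolding remove_first_column_def by simp

function hook_lengths :: "nat list \<Rightarrow> nat list" where
  "hook_lengths [] = []"
| "hook_lengths (a # r) = (a + length r) # hook_lengths (remove_first_column r)"
  by pat_completeness auto
termination
  by (relation "measure length") (auto simp: le_imp_less_Suc length_remove_first_column)

lemma hook_lengths_eq_Nil_iff [simp]: "hook_lengths xs = [] \<longleftrightarrow> xs = []"
  by (cases xs) auto

lemma is_partition_Cons:
  "is_partition (a # r) \<longleftrightarrow> 0 < a \<and> (\<forall>x\<in>set r. x \<le> a) \<and> is_partition r"
  unfolding is_partition_def by auto

lemma is_partition_remove_first_column:
  assumes "is_partition r" shows "is_partition (remove_first_column r)"
proof -
  have "sorted_wrt (\<ge>) (filter (\<lambda>x. 2 \<le> x) r)"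
    using assms by (simp add: is_partition_def sorted_wrt_filter)
  then have "sorted_wrt (\<ge>) (remove_first_column r)"
    unfolding remove_first_column_def sorted_wrt_map by (rule sorted_wrt_mono_rel[rotated]) auto
  then show ?thesis by (auto simp: is_partition_def remove_first_column_def)
qed

lemma sum_list_remove_first_column:
  "\<forall>x\<in>set r. 0 < x \<Longrightarrow> sum_list r = length r + sum_list (remove_first_column r)"
  unfolding remove_first_column_def by (induct r) auto

lemma sum_list_hook_lengths: "is_partition xs \<Longrightarrow> sum_list (hook_lengths xs) = sum_list xs"
proof (induction xs rule: hook_lengths.induct)
  case (2 a r)
  then show ?case
    using sum_list_remove_first_column[of r] is_partition_remove_first_column[of r]
    by (simp add: is_partition_Cons is_partition_def)
qed simp

lemma hd_remove_first_column_less: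
  assumes "\<forall>x\<in>set r. x \<le> a" "remove_first_column r \<noteq> []"
  shows "hd (remove_first_column r) < a"
proof -
  let ?f = "filter (\<lambda>x. 2 \<le> x) r"
  have "?f \<noteq> []" using assms(2) unfolding remove_first_column_def by simp
  then have "hd ?f \<in> set r" "2 \<le> hd ?f" using hd_in_set by fastforce+
  then show ?thesis
    using assms unfolding remove_first_column_def by (auto simp: hd_map)
qed

lemma parts_above_remove_first_column:
  "parts_above (mset (remove_first_column r)) i = parts_above (mset r) (Suc i)"
proof -
  have "filter (\<lambda>x. i < x) (remove_first_column r)
      = map (\<lambda>x. x - 1) (filter (\<lambda>x. Suc i < x) r)"
    unfolding remove_first_column_def by (induct r) auto
  then show ?thesis by (simp add: parts_above_mset)
qed

lemma parts_above_eq_0: "\<forall>x\<in>set r. x \<le> a \<Longrightarrow> a \<le> k \<Longrightarrow> parts_above (mset r) k = 0"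
  by (auto simp: parts_above_mset filter_empty_conv)

text \<open>Removing the principal hook shifts the diagonal by one, so a fixed point either sits in
  the first row (\<open>\<lambda>\<^sub>1 = 1\<close>) or survives as a fixed point of the remaining diagram.\<close>
lemma has_fixed_point_Cons:
  assumes "is_partition (a # r)"
  shows "has_fixed_point (mset (a # r)) \<longleftrightarrow> a = 1 \<or> has_fixed_point (mset (remove_first_column r))"
proof -
  have a0: "0 < a" and le: "\<forall>x\<in>set r. x \<le> a" using assms is_partition_Cons by auto
  note zero = parts_above_eq_0[OF le]
  show ?thesis
  proof
    assume "has_fixed_point (mset (a # r))"
    then obtain j where j: "1 \<le> j" "parts_above (mset (a # r)) j < j"
        "j \<le> parts_above (mset (a # r)) (j - 1)"
      unfolding has_fixed_point_def by auto
    show "a = 1 \<or> has_fixed_point (mset (remove_first_column r))"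
    proof (cases "j = 1")
      case True
      then show ?thesis using j(2) a0 by (auto split: if_splits)
    next
      case False
      then obtain i where i: "j = Suc i" "1 \<le> i" using j(1) by (cases j) auto
      have "i < a"
        using j i zero[of i] by (auto split: if_splits)
      then have "parts_above (mset r) (Suc i) < i \<and> i \<le> parts_above (mset r) i"
        using j i zero[of i] zero[of "Suc i"] by (auto split: if_splits)
      then show ?thesis
        unfolding has_fixed_point_def parts_above_remove_first_column using i
        by (intro disjI2 exI[of _ i]) simp
    qed
  next
    assume "a = 1 \<or> has_fixed_point (mset (remove_first_column r))"
    then show "has_fixed_point (mset (a # r))"
    proof
      assume "a = 1"
      then have "parts_above (mset (a # r)) 1 = 0" "1 \<le> parts_above (mset (a # r)) 0"
        using zero by auto
      then show ?thesis unfolding has_fixed_point_def by (intro exI[of _ 1]) simp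
    next
      assume "has_fixed_point (mset (remove_first_column r))"
      then obtain i where i: "1 \<le> i" "parts_above (mset r) (Suc i) < i"
          "i \<le> parts_above (mset r) i"
        unfolding has_fixed_point_def parts_above_remove_first_column by auto
      then have "i < a" using zero[of i] by (metis not_less le_zero_eq not_one_le_zero)
      then show ?thesis
        using i unfolding has_fixed_point_def by (intro exI[of _ "Suc i"]) simp
    qed
  qed
qed

lemma RR2_iff_sorted_wrt: "RR2 xs \<longleftrightarrow> sorted_wrt (\<lambda>x y. y + 2 \<le> x) xs \<and> (\<forall>x\<in>set xs. 1 < x)"
proof -
  have "transp (\<lambda>x y :: nat. y + 2 \<le> x)" by (auto intro: transpI)
  then have gaps: "sorted_wrt (\<lambda>x y. y + 2 \<le> x) xs
      \<longleftrightarrow> (\<forall>i. Suc i < length xs \<longrightarrow> xs ! Suc i + 2 \<le> xs ! i)"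
    by (rule sorted_wrt_iff_nth_Suc_transp)
  show ?thesis
    unfolding RR2_def is_partition_def gaps[symmetric]
    by (auto intro: sorted_wrt_mono_rel[rotated])
qed

lemma RR2_Cons: "RR2 (h # t) \<longleftrightarrow> 1 < h \<and> RR2 t \<and> (t \<noteq> [] \<longrightarrow> hd t + 2 \<le> h)"
proof (cases t)
  case (Cons b s)
  have "sorted_wrt (\<lambda>x y. y + 2 \<le> x) (b # s) \<Longrightarrow> \<forall>y\<in>set s. y \<le> b" by auto
  then show ?thesis unfolding RR2_iff_sorted_wrt Cons by fastforce
qed (simp add: RR2_iff_sorted_wrt)

lemma RR2_hook_lengths:
  "is_partition xs \<Longrightarrow> \<not> has_fixed_point (mset xs) \<Longrightarrow> RR2 (hook_lengths xs)"
proof (induction xs rule: hook_lengths.induct)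
  case 1
  then show ?case by (simp add: RR2_def is_partition_def)
next
  case (2 a r)
  have le: "\<forall>x\<in>set r. x \<le> a" and a1: "1 < a"
    using 2(2,3) has_fixed_point_Cons[OF 2(2)] by (auto simp: is_partition_Cons)
  have IH: "RR2 (hook_lengths (remove_first_column r))"
    using 2 has_fixed_point_Cons is_partition_remove_first_column
    by (simp add: is_partition_Cons)
  have "hd (hook_lengths (remove_first_column r)) + 2 \<le> a + length r"
    if ne: "remove_first_column r \<noteq> []"
  proof -
    obtain b s where bs: "remove_first_column r = b # s" using ne by (cases "remove_first_column r") auto
    have "b < a" using hd_remove_first_column_less[OF le ne] bs by simp
    moreover have "length s < length r" using length_remove_first_column[of r] bs by simp
    ultimately show ?thesis using bs by simp
  qed
  then show ?case using IH a1 by (simp add: RR2_Cons)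
qed

lemma omega22_Cons:
  assumes "t \<noteq> []"
  shows "omega22 (h # t) = (int h - int (hd t) - 1) * omega22 t"
proof -
  obtain n where n: "length t = Suc n" using assms by (cases t) auto
  have "(\<Prod>i<length (h # t) - 1. int ((h # t) ! i) - int ((h # t) ! Suc i) - 1)
      = (int h - int (hd t) - 1) * (\<Prod>i<length t - 1. int (t ! i) - int (t ! Suc i) - 1)"
    using n by (simp del: prod.lessThan_Suc add: prod.lessThan_Suc_shift hd_conv_nth assms)
  then show ?thesis using assms unfolding omega22_def by simp
qed

section \<open>Rebuilding a partition from its hook lengths\<close>

definition hook_fibre :: "nat list \<Rightarrow> nat list set" where
  "hook_fibre p = {xs. is_partition xs \<and> \<not> has_fixed_point (mset xs) \<and> hook_lengths xs = p}"

text \<open>The hook of length \<open>h\<close> with arm \<open>a - 1\<close> wrapped around the diagram \<open>mu\<close>.\<close>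
definition attach_hook :: "nat \<Rightarrow> nat list \<Rightarrow> nat \<Rightarrow> nat list" where
  "attach_hook h mu a = a # map Suc mu @ replicate (h - a - length mu) 1"

text \<open>The first part must exceed every part of \<open>map Suc mu\<close>, and it must not be \<open>1\<close>, which would
  be a fixed point.\<close>
definition least_first_part :: "nat list \<Rightarrow> nat" where
  "least_first_part mu = (if mu = [] then 2 else Suc (hd mu))"

lemma remove_first_column_append_ones:
  "\<forall>x\<in>set mu. 0 < x \<Longrightarrow> remove_first_column (map Suc mu @ replicate k 1) = mu"
  unfolding remove_first_column_def by (induct mu) (auto simp: filter_empty_conv)

lemma append_ones_remove_first_column:
  "is_partition r \<Longrightarrow>
     r = map Suc (remove_first_column r) @ replicate (length r - length (remove_first_column r)) 1"
proof (induction r)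
  case (Cons x r)
  then have r: "is_partition r" and le: "\<forall>y\<in>set r. y \<le> x" and x0: "0 < x"
    by (auto simp: is_partition_Cons)
  show ?case
  proof (cases "2 \<le> x")
    case True
    then show ?thesis using Cons.IH[OF r] length_remove_first_column[of r]
      by (simp add: remove_first_column_def Suc_diff_le)
  next
    case False
    then have "x = 1" using x0 by simp
    moreover have "\<forall>y\<in>set r. y = 1" using le r \<open>x = 1\<close> by (fastforce simp: is_partition_def)
    then have "filter (\<lambda>y. 2 \<le> y) r = []" "replicate (length r) 1 = r"
      by (auto simp: filter_empty_conv replicate_length_same)
    ultimately show ?thesis by (simp add: remove_first_column_def)
  qed
qed (simp add: remove_first_column_def)

lemma remove_first_column_tl_attach_hook:
  "\<forall>x\<in>set mu. 0 < x \<Longrightarrow> remove_first_column (tl (attach_hook h mu a)) = mu"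
  unfolding attach_hook_def list.sel(3) by (rule remove_first_column_append_ones)

lemma attach_hook_mem_hook_fibre:
  assumes mu: "mu \<in> hook_fibre q" and a: "least_first_part mu \<le> a" "a \<le> h - length mu"
  shows "attach_hook h mu a \<in> hook_fibre (h # q)"
proof -
  define r where "r = map Suc mu @ replicate (h - a - length mu) 1"
  have mu_part: "is_partition mu" and mu_free: "\<not> has_fixed_point (mset mu)"
    and mu_hooks: "hook_lengths mu = q"
    using mu by (auto simp: hook_fibre_def)
  have a2: "2 \<le> a"
    using a(1) mu_part by (cases mu) (auto simp: least_first_part_def is_partition_def)
  have "Suc x \<le> a" if "x \<in> set mu" for x
    using that a(1) mu_part by (cases mu) (auto simp: least_first_part_def is_partition_def)
  then have "\<forall>x\<in>set r. x \<le> a" using a2 by (auto simp: r_def)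
  moreover have "sorted_wrt (\<ge>) (replicate k (1::nat))" for k by (induct k) auto
  then have "is_partition r"
    using mu_part unfolding is_partition_def r_def
    by (auto simp: sorted_wrt_append sorted_wrt_map intro: sorted_wrt_mono_rel[rotated])
  ultimately have part: "is_partition (a # r)" using a2 by (simp add: is_partition_Cons)
  have strip: "remove_first_column r = mu"
    unfolding r_def using mu_part by (intro remove_first_column_append_ones) (simp add: is_partition_def)
  have "\<not> has_fixed_point (mset (a # r))"
    using has_fixed_point_Cons[OF part] strip mu_free a2 by simp
  moreover have "hook_lengths (a # r) = h # q"
    using strip mu_hooks a a2 by (simp add: r_def)
  ultimately show ?thesis using part by (simp add: hook_fibre_def attach_hook_def r_def)
qed

lemma hook_fibre_Cons_imp_attach_hook:
  assumes "xs \<in> hook_fibre (h # q)"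
  obtains mu a where "mu \<in> hook_fibre q" "least_first_part mu \<le> a" "a \<le> h - length mu"
    "xs = attach_hook h mu a"
proof -
  obtain a r where xs: "xs = a # r" using assms by (cases xs) (auto simp: hook_fibre_def)
  define mu where "mu = remove_first_column r"
  have part: "is_partition (a # r)" and free: "\<not> has_fixed_point (mset (a # r))"
    and hooks: "a + length r = h" "hook_lengths mu = q"
    using assms by (auto simp: hook_fibre_def xs mu_def)
  have le: "\<forall>x\<in>set r. x \<le> a" and r: "is_partition r" and a0: "0 < a"
    using part by (auto simp: is_partition_Cons)
  have a1: "a \<noteq> 1" and mu_free: "\<not> has_fixed_point (mset mu)"
    using has_fixed_point_Cons[OF part] free by (auto simp: mu_def)
  have "mu \<in> hook_fibre q"
    using is_partition_remove_first_column[OF r] mu_free hooks by (simp add: hook_fibre_def mu_def)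
  moreover have "least_first_part mu \<le> a"
    using a0 a1 hd_remove_first_column_less[OF le] by (auto simp: least_first_part_def mu_def)
  moreover have "length mu \<le> length r" using length_remove_first_column by (simp add: mu_def)
  then have "a \<le> h - length mu" using hooks by simp
  moreover have "h - a - length mu = length r - length mu" using hooks by simp
  then have "xs = attach_hook h mu a"
    unfolding xs attach_hook_def using append_ones_remove_first_column[OF r] by (simp add: mu_def)
  ultimately show ?thesis using that by blast
qed

lemma hook_fibre_Cons:
  "hook_fibre (h # q)
     = (\<lambda>(mu, a). attach_hook h mu a) ` (SIGMA mu:hook_fibre q. {least_first_part mu..h - length mu})"
  (is "_ = ?image")
proof (intro equalityI subsetI)
  fix xs assume "xs \<in> hook_fibre (h # q)"
  then show "xs \<in> ?image" by (rule hook_fibre_Cons_imp_attach_hook) force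
qed (auto intro: attach_hook_mem_hook_fibre)

lemma inj_on_attach_hook:
  "inj_on (\<lambda>(mu, a). attach_hook h mu a) (SIGMA mu:hook_fibre q. A mu)"
proof -
  have "mu = mu' \<and> a = a'"
    if "mu \<in> hook_fibre q" "mu' \<in> hook_fibre q" and eq: "attach_hook h mu a = attach_hook h mu' a'"
    for mu mu' a a'
  proof
    have "\<forall>x\<in>set mu. 0 < x" "\<forall>x\<in>set mu'. 0 < x"
      using that by (auto simp: hook_fibre_def is_partition_def)
    then show "mu = mu'"
      using arg_cong[OF eq, of "\<lambda>xs. remove_first_column (tl xs)"]
      by (simp add: remove_first_column_tl_attach_hook)
    show "a = a'" using eq by (simp add: attach_hook_def)
  qed
  then show ?thesis by (auto intro!: inj_onI)
qed

lemma hook_fibre_Nil: "hook_fibre [] = {[]}"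
  by (auto simp: hook_fibre_def is_partition_def has_fixed_point_def)

lemma card_first_part_range:
  assumes "mu \<in> hook_fibre q" "q \<noteq> [] \<longrightarrow> hd q + 2 \<le> h"
  shows "card {least_first_part mu..h - length mu} = (if q = [] then h - 1 else h - hd q - 1)"
proof (cases mu)
  case Nil
  then show ?thesis using assms(1) by (auto simp: hook_fibre_def least_first_part_def)
next
  case (Cons b s)
  then have "q = (b + length s) # hook_lengths (remove_first_column s)"
    using assms(1) by (simp add: hook_fibre_def)
  then show ?thesis using Cons assms(2) by (simp add: least_first_part_def)
qed

lemma card_hook_fibre: "RR2 p \<Longrightarrow> finite (hook_fibre p) \<and> int (card (hook_fibre p)) = omega22 p"
proof (induction p)
  case Nil
  then show ?case by (simp add: hook_fibre_Nil omega22_def)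
next
  case (Cons h q)
  define c where "c = (if q = [] then h - 1 else h - hd q - 1)"
  define S where "S = (SIGMA mu:hook_fibre q. {least_first_part mu..h - length mu})"
  have h: "1 < h" "q \<noteq> [] \<longrightarrow> hd q + 2 \<le> h" and IH: "finite (hook_fibre q)"
    "int (card (hook_fibre q)) = omega22 q"
    using Cons by (auto simp: RR2_Cons)
  have "card S = card (hook_fibre q) * c"
    using IH(1) card_first_part_range[OF _ h(2)] by (simp add: S_def c_def)
  then have "card (hook_fibre (h # q)) = card (hook_fibre q) * c"
    unfolding hook_fibre_Cons using card_image[OF inj_on_attach_hook] by (simp add: S_def)
  moreover have "omega22 (h # q) = int c * omega22 q"
  proof (cases "q = []")
    case True
    then show ?thesis using h by (simp add: c_def omega22_def)
  next
    case False
    then show ?thesis using h by (simp add: c_def omega22_Cons)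
  qed
  moreover have "finite (hook_fibre (h # q))"
    unfolding hook_fibre_Cons using IH(1) by simp
  ultimately show ?case using IH(2) by simp
qed

lemma sum_omega22_eq_card_fixed_point_free:
  "(\<Sum>p \<in> {p \<in> partitions_of n. RR2 p}. omega22 p)
     = int (card {xs \<in> partitions_of n. \<not> has_fixed_point (mset xs)})"
proof -
  define N where "N = {xs \<in> partitions_of n. \<not> has_fixed_point (mset xs)}"
  define T where "T = {p \<in> partitions_of n. RR2 p}"
  have "hook_lengths ` N \<subseteq> T"
    using RR2_hook_lengths sum_list_hook_lengths
    by (auto simp: N_def T_def partitions_of_def RR2_def)
  moreover have "{xs \<in> N. hook_lengths xs = p} = hook_fibre p" if "p \<in> T" for p
    using that sum_list_hook_lengths by (auto simp: N_def T_def hook_fibre_def partitions_of_def)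
  moreover have "finite N" "finite T" using finite_partitions_of by (simp_all add: N_def T_def)
  ultimately have "int (card N) = (\<Sum>p\<in>T. int (card (hook_fibre p)))"
    using sum.group[of N T hook_lengths "\<lambda>_. 1 :: int"] by simp
  also have "\<dots> = (\<Sum>p\<in>T. omega22 p)"
    using card_hook_fibre by (simp add: T_def)
  finally show ?thesis by (simp add: N_def T_def)
qed

theorem theorem7:
  shows "(Abs_fps (\<lambda>n. \<Sum>xs\<in>{xs\<in>partitions_of n. RR2 xs}. omega22 xs) :: int fps)
       = Abs_fps (\<lambda>n. int (card {xs\<in>partitions_of n. crank xs \<ge> 0}))"
  by (simp add: sum_omega22_eq_card_fixed_point_free card_crank_nonneg)

end
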